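(* Let $X\sim\mathbb P_X$ on $\mathcal X$, $\mathcal Y$ finite, $r:\mathcal X\to\mathbb R^{\mathcal Y}$ and $g:\mathcal X\to\mathbb R^K$. Suppose that for every $a\in\mathbb R^{\mathcal Y}\setminus\{0\}$ and every $b\in\mathbb R^K$, $\Pr\big(a^\top r(X)+b^\top g(X)=0\big)=0$ (i.e., the push-forward of $\mathbb P_X$ under $x\mapsto(r(x),g(x))\in\mathbb R^{\mathcal Y\times K}$ gives no mass to any strict linear subspace with a nonzero component in the $\mathbb R^{\mathcal Y}$ coordinates). Then for every $w:\mathcal Y\times[K]\to\mathbb R$, the set $\operatorname{argmin}_{y\in\mathcal Y}\big(r(X)_y-\sum_{k\in[K]}g(X)_k w(y,k)\big)$ has exactly one element $\mathbb P_X$-almost surely. *)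

theory Defs
  imports "HOL-Probability.Probability"
begin

definition argmin_set :: "('y \<Rightarrow> real) \<Rightarrow> 'y set" where
  "argmin_set F = {y. \<forall>y'. F y \<le> F y'}"

end

theory Submission
  imports Defs
begin

text \<open>A tie between two labels \<open>y\<^sub>1 \<noteq> y\<^sub>2\<close> in the objective is the vanishing of the linear
  form with coefficients \<open>a = \<delta>\<^sub>y\<^sub>1 - \<delta>\<^sub>y\<^sub>2\<close> on \<open>r(X)\<close> and \<open>b = w(y\<^sub>2,\<cdot>) - w(y\<^sub>1,\<cdot>)\<close> on \<open>g(X)\<close>;
  since \<open>a \<noteq> 0\<close>, every such tie is a null event. There are finitely many pairs of labels,
  so almost surely the objective is injective, and an injective function on a finite
  type has exactly one minimiser.\<close>

lemma argmin_set_nonempty: "argmin_set (F :: 'y::finite \<Rightarrow> real) \<noteq> {}"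
proof -
  have "Min (range F) \<in> range F"
    by (simp add: Min_in)
  then obtain y where "F y = Min (range F)"
    by (metis rangeE)
  then have "y \<in> argmin_set F"
    by (simp add: argmin_set_def)
  then show ?thesis
    by blast
qed

lemma card_argmin_set_inj:
  fixes F :: "'y::finite \<Rightarrow> real"
  assumes "inj F"
  shows "card (argmin_set F) = 1"
proof -
  have "y1 = y2" if "y1 \<in> argmin_set F" "y2 \<in> argmin_set F" for y1 y2
  proof -
    have "F y1 = F y2"
      using that by (auto simp: argmin_set_def intro: order.antisym)
    with assms show ?thesis
      by (rule injD)
  qed
  moreover obtain y where "y \<in> argmin_set F"
    using argmin_set_nonempty by blast
  ultimately have "argmin_set F = {y}"
    by blast
  then show ?thesis
    by simp
qed

lemma sum_delta_diff:
  fixes f :: "'y::finite \<Rightarrow> 'a::ring_1"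
  shows "(\<Sum>y\<in>UNIV. (of_bool (y = y1) - of_bool (y = y2)) * f y) = f y1 - f y2"
  by (simp add: left_diff_distrib sum_subtractf)

lemma AE_no_tie:
  fixes M :: "'x measure"
    and r :: "'x \<Rightarrow> 'y::finite \<Rightarrow> real"
    and g :: "'x \<Rightarrow> nat \<Rightarrow> real"
    and w :: "'y \<Rightarrow> nat \<Rightarrow> real"
  assumes "finite_measure M"
    and r_meas: "\<And>y. (\<lambda>x. r x y) \<in> borel_measurable M"
    and g_meas: "\<And>k. k \<in> {1..K} \<Longrightarrow> (\<lambda>x. g x k) \<in> borel_measurable M"
    and nondegenerate: "\<And>(a :: 'y \<Rightarrow> real) (b :: nat \<Rightarrow> real). a \<noteq> (\<lambda>_. 0) \<Longrightarrow>
           measure M {x \<in> space M. (\<Sum>y\<in>UNIV. a y * r x y) + (\<Sum>k\<in>{1..K}. b k * g x k) = 0} = 0"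
    and "y1 \<noteq> y2"
  shows "AE x in M. r x y1 - (\<Sum>k\<in>{1..K}. g x k * w y1 k)
                   \<noteq> r x y2 - (\<Sum>k\<in>{1..K}. g x k * w y2 k)"
proof -
  interpret finite_measure M by fact
  define a :: "'y \<Rightarrow> real" where "a y = of_bool (y = y1) - of_bool (y = y2)" for y
  define b where "b k = w y2 k - w y1 k" for k
  define T where "T = {x \<in> space M. (\<Sum>y\<in>UNIV. a y * r x y) + (\<Sum>k\<in>{1..K}. b k * g x k) = 0}"
  have "a y1 = 1"
    using \<open>y1 \<noteq> y2\<close> by (simp add: a_def)
  then have "a \<noteq> (\<lambda>_. 0)"
    by auto
  then have "measure M T = 0"
    unfolding T_def by (rule nondegenerate)
  moreover have "T \<in> sets M"
    unfolding T_def using r_meas g_meas by measurable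
  ultimately have "T \<in> null_sets M"
    by (simp add: null_setsI emeasure_eq_measure)
  moreover have "x \<in> T" if "x \<in> space M"
      "r x y1 - (\<Sum>k\<in>{1..K}. g x k * w y1 k) = r x y2 - (\<Sum>k\<in>{1..K}. g x k * w y2 k)" for x
    using that unfolding T_def a_def b_def
    by (simp add: sum_delta_diff right_diff_distrib sum_subtractf mult.commute)
  ultimately show ?thesis
    by (intro AE_I'[of T]) auto
qed

theorem lemma1:
  fixes M :: "'x measure"
    and r :: "'x \<Rightarrow> 'y::finite \<Rightarrow> real"
    and g :: "'x \<Rightarrow> nat \<Rightarrow> real"
    and K :: nat
  assumes "prob_space M"
    and "\<And>y. (\<lambda>x. r x y) \<in> borel_measurable M"
    and "\<And>k. k \<in> {1..K} \<Longrightarrow> (\<lambda>x. g x k) \<in> borel_measurable M"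
    and "\<And>(a :: 'y \<Rightarrow> real) (b :: nat \<Rightarrow> real). a \<noteq> (\<lambda>_. 0) \<Longrightarrow>
           measure M {x \<in> space M. (\<Sum>y\<in>UNIV. a y * r x y) + (\<Sum>k\<in>{1..K}. b k * g x k) = 0} = 0"
  shows "\<forall>w :: 'y \<Rightarrow> nat \<Rightarrow> real.
           AE x in M. card (argmin_set (\<lambda>y. r x y - (\<Sum>k\<in>{1..K}. g x k * w y k))) = 1"
proof
  fix w :: "'y \<Rightarrow> nat \<Rightarrow> real"
  have "finite_measure M"
    using \<open>prob_space M\<close> by (simp add: prob_space_def)
  then have "AE x in M. r x y1 - (\<Sum>k\<in>{1..K}. g x k * w y1 k)
                        \<noteq> r x y2 - (\<Sum>k\<in>{1..K}. g x k * w y2 k)" if "y1 \<noteq> y2" for y1 y2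
    using assms(2-4) that by (rule AE_no_tie)
  then have "AE x in M. \<forall>y1 \<in> UNIV. \<forall>y2 \<in> - {y1}. r x y1 - (\<Sum>k\<in>{1..K}. g x k * w y1 k)
                                         \<noteq> r x y2 - (\<Sum>k\<in>{1..K}. g x k * w y2 k)"
    by (intro AE_finite_allI) auto
  then show "AE x in M. card (argmin_set (\<lambda>y. r x y - (\<Sum>k\<in>{1..K}. g x k * w y k))) = 1"
    by eventually_elim (rule card_argmin_set_inj, rule injI, blast)
qed

end
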